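(* Under Assumptions 1–4 below, the iterates of Algorithm 2Direction satisfy, for every $t\ge0$, with $s_t=\frac{\gamma_{t+1}}{\bar L+\Gamma_{t+1}\mu}$, $$\mathbb E_t\|w^{t+1}-u^{t+1}\|^2\le\Big(1-\frac\alpha2\Big)\|w^t-u^t\|^2+\frac4\alpha s_t^2\|k^t-\nabla f(z^t)\|^2+\frac{2\omega}{n}s_t^2\frac1n\sum_{i=1}^n\|\nabla f_i(z^t)-h_i^t\|^2+s_t^2\Big(\frac{4\omega L_{\max}}{n}+\frac{8L}{\alpha}\Big)D_f(z^t,y^{t+1}),$$ where $D_f(x,y)=f(x)-f(y)-\langle\nabla f(y),x-y\rangle$.
   Context: Setting: $f=\frac1n\sum_{i=1}^nf_i$, $f_i:\mathbb R^d\to\mathbb R$. Assumption 1: each $f_i$ is $L_i$-smooth, $L_{\max}=\max_iL_i$, and $\widehat L>0$ satisfies $\frac1n\sum_i\|\nabla f_i(x)-\nabla f_i(y)\|^2\le\widehat L^2\|x-y\|^2$ for all $x,y$. Assumption 2: $f$ is $L$-smooth. Assumption 3: each $f_i$ is convex and $f$ is $\mu$-strongly convex ($\mu\ge0$) with minimizer $x^*$. Assumption 4: the randomness of all compressors is drawn independently (of each other, of the coins $c^t$, and of the past). Compressor classes: $\mathbb U(\omega)$ ($\omega\ge0$) = stochastic maps $\mathcal C$ with $\mathbb E\mathcal C(x)=x$, $\mathbb E\|\mathcal C(x)-x\|^2\le\omega\|x\|^2$; $\mathbb B(\alpha)$ ($\alpha\in(0,1]$) = possibly stochastic maps with $\mathbb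 E\|\mathcal C(x)-x\|^2\le(1-\alpha)\|x\|^2$. Algorithm 2Direction: compressors $\mathcal C_i^{D,y},\mathcal C_i^{D,z}\in\mathbb U(\omega)$ (workers), $\mathcal C^P\in\mathbb B(\alpha)$ (server); parameters $\bar L>0$, $\mu\ge0$, $p\in(0,1]$, $\Gamma_0\ge1$, $\tau\in(0,1]$, $x^0,h_1^0,\dots,h_n^0,k^0,v^0\in\mathbb R^d$. Set $\beta=1/(\omega+1)$, $w^0=z^0=u^0=x^0$, $h^0=\frac1n\sum_ih_i^0$, $\theta_{\min}=\frac14\min\{1,\alpha/p,\tau/p,\beta/p\}$. For $t=0,1,\dots$: let $\bar\theta_{t+1}$ be the largest root of $p\bar L\Gamma_t\theta^2+p(\bar L+\Gamma_t\mu)\theta-(\bar L+\Gamma_t\mu)=0$, $\theta_{t+1}=\min\{\bar\theta_{t+1},\theta_{\min}\}$, $\gamma_{t+1}=p\theta_{t+1}\Gamma_t/(1-p\theta_{t+1})$, $\Gamma_{t+1}=\Gamma_t+\gamma_{t+1}$; $y^{t+1}=\theta_{t+1}w^t+(1-\theta_{t+1})z^t$; $m_i^{t,y}=\mathcal C_i^{D,y}(\nabla f_i(y^{t+1})-h_i^t)$; $g^{t+1}=h^t+\frac1n\sum_im_i^{t,y}$; $u^{t+1}=\arg\min_x\{\langle g^{t+1},x\rangle+\frac{\bar L+\Gamma_t\mu}{2\gamma_{t+1}}\|x-u^t\|^2+\frac\mu2\|x-y^{t+1}\|^2\}$; $q^{t+1}=\arg\min_x\{\langle k^t,x\rangle+\frac{\bar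 L+\Gamma_t\mu}{2\gamma_{t+1}}\|x-w^t\|^2+\frac\mu2\|x-y^{t+1}\|^2\}$; $w^{t+1}=q^{t+1}+\mathcal C^P(u^{t+1}-q^{t+1})$; $x^{t+1}=\theta_{t+1}u^{t+1}+(1-\theta_{t+1})z^t$; draw $c^t\sim\mathrm{Bernoulli}(p)$, and set $(k^{t+1},z^{t+1})=(v^t,x^{t+1})$ if $c^t=1$, $(k^{t+1},z^{t+1})=(k^t,z^t)$ if $c^t=0$; $m_i^{t,z}=\mathcal C_i^{D,z}(\nabla f_i(z^{t+1})-h_i^t)$; $h_i^{t+1}=h_i^t+\beta m_i^{t,z}$; $v^{t+1}=(1-\tau)v^t+\tau(h^t+\frac1n\sum_im_i^{t,z})$; $h^{t+1}=h^t+\frac\beta n\sum_im_i^{t,z}$. $\mathbb E_t$ denotes conditional expectation given the randomness of the first $t$ iterations. *)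

theory Defs
  imports "HOL-Analysis.Analysis" "HOL-Probability.Probability"
begin

text \<open>Compressors are modelled as Markov kernels: \<open>C x\<close> is the law of the
  random output \<open>\<C>(x)\<close>.  Measurability of the kernel is required so that
  expectations of composed random quantities are meaningful.\<close>

definition unbiased_compressor :: "real \<Rightarrow> ('a::euclidean_space \<Rightarrow> 'a measure) \<Rightarrow> bool" where
  "unbiased_compressor \<omega> C \<longleftrightarrow> \<omega> \<ge> 0 \<and> C \<in> borel \<rightarrow>\<^sub>M prob_algebra borel \<and>
     (\<forall>x. prob_space (C x) \<and> sets (C x) = sets borel \<and>
          integrable (C x) (\<lambda>y. y) \<and> (\<integral>y. y \<partial>C x) = x \<and>
          (\<integral>\<^sup>+y. ennreal ((norm (y - x))\<^sup>2) \<partial>C x) \<le> ennreal (\<omega> * (norm x)\<^sup>2))"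

definition contractive_compressor :: "real \<Rightarrow> ('a::euclidean_space \<Rightarrow> 'a measure) \<Rightarrow> bool" where
  "contractive_compressor \<alpha> C \<longleftrightarrow> 0 < \<alpha> \<and> \<alpha> \<le> 1 \<and> C \<in> borel \<rightarrow>\<^sub>M prob_algebra borel \<and>
     (\<forall>x. prob_space (C x) \<and> sets (C x) = sets borel \<and>
          (\<integral>\<^sup>+y. ennreal ((norm (y - x))\<^sup>2) \<partial>C x) \<le> ennreal ((1 - \<alpha>) * (norm x)\<^sup>2))"

definition strongly_convex :: "real \<Rightarrow> ('a::real_inner \<Rightarrow> real) \<Rightarrow> bool" where
  "strongly_convex \<mu> F \<longleftrightarrow> convex_on UNIV (\<lambda>x. F x - \<mu> / 2 * (norm x)\<^sup>2)"

definition bregman :: "('a::real_inner \<Rightarrow> real) \<Rightarrow> ('a \<Rightarrow> 'a) \<Rightarrow> 'a \<Rightarrow> 'a \<Rightarrow> real" where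
  "bregman F GF x y = F x - F y - GF y \<bullet> (x - y)"

definition theta_bar :: "real \<Rightarrow> real \<Rightarrow> real \<Rightarrow> real \<Rightarrow> real" where
  "theta_bar Lb \<mu> p \<Gamma> =
     Max {\<theta>. p * Lb * \<Gamma> * \<theta>\<^sup>2 + p * (Lb + \<Gamma> * \<mu>) * \<theta> - (Lb + \<Gamma> * \<mu>) = 0}"

definition theta_min :: "real \<Rightarrow> real \<Rightarrow> real \<Rightarrow> real \<Rightarrow> real" where
  "theta_min \<alpha> p \<tau> \<beta> = 1/4 * min 1 (min (\<alpha>/p) (min (\<tau>/p) (\<beta>/p)))"

end

theory Submission
  imports Defs "HOL-Library.Quadratic_Discriminant"
begin

(*
  Both u^{t+1} and q^{t+1} minimise the same strongly convex quadratic, differing only in the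
  linear term (g^{t+1} versus k^t) and the anchor (u^t versus w^t).  In closed form this gives
  u^{t+1} - q^{t+1} = a (u^t - w^t) - s (g^{t+1} - k^t) with 0 <= a <= 1 and s = s_t.
  Integrating out the server compressor first contracts the second moment by 1 - alpha.  The
  worker compressors are independent and unbiased, so the remaining second moment is that of
  a (u^t - w^t) - s (grad f(y^{t+1}) - k^t) plus the sum of their variances, at most
  (omega / n^2) sum_i |grad f_i(y^{t+1}) - h_i^t|^2.  Young's inequality with parameter alpha/2
  and the bound |grad phi(y) - c|^2 <= 2 |grad phi(x) - c|^2 + 4 L_phi D_phi(x, y), valid for
  every convex L_phi-smooth phi by cocoercivity of its gradient, applied to f and to each f_i
  with x = z^t, give the claim.
*)

section \<open>Norm inequalities\<close>

lemma power2_norm_add: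
  fixes x y :: "'a::real_inner"
  shows "(norm (x + y))\<^sup>2 = (norm x)\<^sup>2 + 2 * (x \<bullet> y) + (norm y)\<^sup>2"
  by (simp add: power2_norm_eq_inner inner_add_left inner_add_right inner_commute)

lemma power2_norm_add_le:
  fixes x y :: "'a::real_inner"
  assumes "t > 0"
  shows "(norm (x + y))\<^sup>2 \<le> (1 + t) * (norm x)\<^sup>2 + (1 + 1 / t) * (norm y)\<^sup>2"
proof -
  have "0 \<le> (t * norm x - norm y)\<^sup>2 / t"
    using assms by simp
  also have "\<dots> = t * (norm x)\<^sup>2 + (norm y)\<^sup>2 / t - 2 * (norm x * norm y)"
    using assms by (simp add: field_simps power2_eq_square)
  finally have "2 * (x \<bullet> y) \<le> t * (norm x)\<^sup>2 + (norm y)\<^sup>2 / t"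
    using norm_cauchy_schwarz[of x y] by linarith
  then show ?thesis
    by (simp add: power2_norm_add algebra_simps)
qed

lemma contraction_power2_norm_le:
  fixes x y :: "'a::real_inner"
  assumes \<alpha>: "0 < \<alpha>" "\<alpha> \<le> 1" and a: "\<bar>a\<bar> \<le> 1"
  shows "(1 - \<alpha>) * (norm (a *\<^sub>R x - y))\<^sup>2 \<le> (1 - \<alpha> / 2) * (norm x)\<^sup>2 + 2 / \<alpha> * (norm y)\<^sup>2"
proof -
  have "(norm (a *\<^sub>R x - y))\<^sup>2 \<le> (1 + \<alpha> / 2) * (a\<^sup>2 * (norm x)\<^sup>2) + (1 + 2 / \<alpha>) * (norm y)\<^sup>2"
    using power2_norm_add_le[of "\<alpha> / 2" "a *\<^sub>R x" "- y"] \<alpha> by (simp add: power_mult_distrib)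
  also have "\<dots> \<le> (1 + \<alpha> / 2) * (norm x)\<^sup>2 + (1 + 2 / \<alpha>) * (norm y)\<^sup>2"
    using \<alpha> a abs_le_square_iff[of a 1] by (intro add_right_mono mult_left_mono mult_left_le_one_le) auto
  finally have "(1 - \<alpha>) * (norm (a *\<^sub>R x - y))\<^sup>2
      \<le> (1 - \<alpha>) * ((1 + \<alpha> / 2) * (norm x)\<^sup>2 + (1 + 2 / \<alpha>) * (norm y)\<^sup>2)"
    using \<alpha> by (intro mult_left_mono) auto
  also have "\<dots> = (1 - \<alpha>) * (1 + \<alpha> / 2) * (norm x)\<^sup>2 + (1 - \<alpha>) * (1 + 2 / \<alpha>) * (norm y)\<^sup>2"
    by (simp add: algebra_simps)
  also have "\<dots> \<le> (1 - \<alpha> / 2) * (norm x)\<^sup>2 + 2 / \<alpha> * (norm y)\<^sup>2"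
  proof (intro add_mono mult_right_mono)
    show "(1 - \<alpha>) * (1 + \<alpha> / 2) \<le> 1 - \<alpha> / 2"
      using \<alpha> by (simp add: algebra_simps)
    show "(1 - \<alpha>) * (1 + 2 / \<alpha>) \<le> 2 / \<alpha>"
      using \<alpha> by (simp add: field_simps)
  qed auto
  finally show ?thesis .
qed

section \<open>Convex functions with Lipschitz gradient\<close>

lemma has_real_derivative_along_line:
  fixes f :: "'a::real_inner \<Rightarrow> real"
  assumes "\<forall>x. (f has_derivative (\<lambda>v. G x \<bullet> v)) (at x)"
  shows "((\<lambda>t. f (x + t *\<^sub>R d)) has_real_derivative (G (x + t *\<^sub>R d) \<bullet> d)) (at t)"
proof -
  have "((\<lambda>t. x + t *\<^sub>R d) has_derivative (\<lambda>s. s *\<^sub>R d)) (at t)"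
    by (auto intro!: derivative_eq_intros)
  from has_derivative_compose[OF this assms[rule_format, of "x + t *\<^sub>R d"]]
  show ?thesis
    by (simp add: o_def has_field_derivative_def mult_commute_abs)
qed

lemma convex_on_imp_above_tangent_plane:
  fixes f :: "'a::real_inner \<Rightarrow> real"
  assumes convex: "convex_on UNIV f" and deriv: "\<forall>x. (f has_derivative (\<lambda>v. G x \<bullet> v)) (at x)"
  shows "f x + G x \<bullet> (y - x) \<le> f y"
proof -
  let ?g = "\<lambda>t. f (x + t *\<^sub>R (y - x))"
  have "convex_on UNIV ?g"
  proof (rule convex_onI)
    fix t a b :: real
    assume "0 < t" "t < 1"
    moreover have "x + ((1 - t) *\<^sub>R a + t *\<^sub>R b) *\<^sub>R (y - x)
        = (1 - t) *\<^sub>R (x + a *\<^sub>R (y - x)) + t *\<^sub>R (x + b *\<^sub>R (y - x))"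
      by (simp add: algebra_simps)
    ultimately show "?g ((1 - t) *\<^sub>R a + t *\<^sub>R b) \<le> (1 - t) * ?g a + t * ?g b"
      using convex_onD[OF convex, of t] by simp
  qed simp
  from convex_on_imp_above_tangent[OF this connected_UNIV _ _ has_real_derivative_along_line[OF deriv]]
  have "G x \<bullet> (y - x) * (1 - 0) \<le> ?g 1 - ?g 0"
    by (metis UNIV_I add_0_right interior_UNIV scale_zero_left)
  then show ?thesis
    by simp
qed

lemma bregman_nonneg:
  assumes "convex_on UNIV f" "\<forall>x. (f has_derivative (\<lambda>v. G x \<bullet> v)) (at x)"
  shows "0 \<le> bregman f G x y"
  using convex_on_imp_above_tangent_plane[OF assms, of y x] by (simp add: bregman_def)

lemma lipschitz_gradient_imp_quadratic_upper_bound: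
  fixes f :: "'a::real_inner \<Rightarrow> real"
  assumes deriv: "\<forall>x. (f has_derivative (\<lambda>v. G x \<bullet> v)) (at x)"
    and lipschitz: "\<forall>x y. norm (G x - G y) \<le> L * norm (x - y)"
  shows "f (x + h) \<le> f x + G x \<bullet> h + L / 2 * (norm h)\<^sup>2"
proof -
  let ?p = "\<lambda>t. f (x + t *\<^sub>R h) - t * (G x \<bullet> h) - L / 2 * t\<^sup>2 * (norm h)\<^sup>2"
  have "?p 1 \<le> ?p 0"
  proof (rule DERIV_nonpos_imp_nonincreasing[where f = ?p])
    fix t :: real
    assume t: "0 \<le> t" "t \<le> 1"
    have "(G (x + t *\<^sub>R h) - G x) \<bullet> h \<le> norm (G (x + t *\<^sub>R h) - G x) * norm h"
      by (rule norm_cauchy_schwarz)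
    also have "\<dots> \<le> L * norm (t *\<^sub>R h) * norm h"
      using lipschitz[rule_format, of "x + t *\<^sub>R h" x] by (intro mult_right_mono) auto
    also have "\<dots> = L * t * (norm h)\<^sup>2"
      using t by (simp add: power2_eq_square)
    finally have "G (x + t *\<^sub>R h) \<bullet> h - G x \<bullet> h - L / 2 * (2 * t) * (norm h)\<^sup>2 \<le> 0"
      by (simp add: inner_diff_left)
    moreover have "(?p has_real_derivative
        G (x + t *\<^sub>R h) \<bullet> h - G x \<bullet> h - L / 2 * (2 * t) * (norm h)\<^sup>2) (at t)"
      using has_real_derivative_along_line[OF deriv, of x h t] by (auto intro!: derivative_eq_intros)
    ultimately show "\<exists>y. (?p has_real_derivative y) (at t) \<and> y \<le> 0"
      by blast
  qed simp
  then show ?thesis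
    by simp
qed

text \<open>Compare the tangent-plane lower bound at \<open>y\<close> with the
  quadratic upper bound at \<open>x\<close>, both evaluated at the point \<open>x - (G x - G y) / L\<close>.\<close>
lemma lipschitz_gradient_cocoercive:
  fixes f :: "'a::real_inner \<Rightarrow> real"
  assumes convex: "convex_on UNIV f" and deriv: "\<forall>x. (f has_derivative (\<lambda>v. G x \<bullet> v)) (at x)"
    and lipschitz: "\<forall>x y. norm (G x - G y) \<le> L * norm (x - y)"
  shows "(norm (G x - G y))\<^sup>2 \<le> 2 * L * bregman f G x y"
proof (cases "x = y")
  case True
  then show ?thesis
    by (simp add: bregman_def)
next
  case False
  have "0 \<le> L * norm (x - y)"
    using lipschitz[rule_format, of x y] norm_ge_zero order_trans by blast
  with False have "0 \<le> L"
    by (simp add: zero_le_mult_iff)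
  show ?thesis
  proof (cases "L = 0")
    case True
    then show ?thesis
      using lipschitz by simp
  next
    case False
    with \<open>0 \<le> L\<close> have L: "0 < L"
      by simp
    define g where "g = G x - G y"
    define h where "h = (- 1 / L) *\<^sub>R g"
    have "f y + G y \<bullet> (x + h - y) \<le> f (x + h)"
      by (rule convex_on_imp_above_tangent_plane[OF convex deriv])
    also have "\<dots> \<le> f x + G x \<bullet> h + L / 2 * (norm h)\<^sup>2"
      by (rule lipschitz_gradient_imp_quadratic_upper_bound[OF deriv lipschitz])
    finally have "(G x - G y) \<bullet> (- h) - L / 2 * (norm h)\<^sup>2 \<le> bregman f G x y"
      by (simp add: bregman_def inner_diff_left inner_add_right inner_diff_right)
    moreover have "(G x - G y) \<bullet> (- h) = (norm g)\<^sup>2 / L"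
      by (simp add: h_def g_def power2_norm_eq_inner)
    moreover have "(norm h)\<^sup>2 = (norm g)\<^sup>2 / L\<^sup>2"
      using L by (simp add: h_def power_divide)
    moreover have "(norm g)\<^sup>2 / L - L / 2 * ((norm g)\<^sup>2 / L\<^sup>2) = (norm g)\<^sup>2 / (2 * L)"
      using L by (simp add: field_simps power2_eq_square)
    ultimately have "(norm g)\<^sup>2 / (2 * L) \<le> bregman f G x y"
      by (simp add: g_def)
    then show ?thesis
      using L by (simp add: g_def field_simps)
  qed
qed

lemma lipschitz_gradient_shift_le:
  fixes f :: "'a::real_inner \<Rightarrow> real"
  assumes "convex_on UNIV f" "\<forall>x. (f has_derivative (\<lambda>v. G x \<bullet> v)) (at x)"
    and "\<forall>x y. norm (G x - G y) \<le> L * norm (x - y)"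
  shows "(norm (G y - c))\<^sup>2 \<le> 2 * (norm (G x - c))\<^sup>2 + 4 * L * bregman f G x y"
proof -
  have "(norm (G y - c))\<^sup>2 \<le> 2 * (norm (G x - c))\<^sup>2 + 2 * (norm (G x - G y))\<^sup>2"
    using power2_norm_add_le[of 1 "G x - c" "G y - G x"] by (simp add: norm_minus_commute)
  then show ?thesis
    using lipschitz_gradient_cocoercive[OF assms, of x y] by simp
qed

lemma sum_power2_norm_gradient_shift_le:
  fixes f :: "'i \<Rightarrow> 'a::real_inner \<Rightarrow> real"
  assumes "\<forall>i\<in>I. convex_on UNIV (f i)" "\<forall>i\<in>I. \<forall>x. (f i has_derivative (\<lambda>v. G i x \<bullet> v)) (at x)"
    and "\<forall>i\<in>I. \<forall>x y. norm (G i x - G i y) \<le> L i * norm (x - y)" and "\<forall>i\<in>I. L i \<le> Lmax"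
  shows "(\<Sum>i\<in>I. (norm (G i y - c i))\<^sup>2)
    \<le> 2 * (\<Sum>i\<in>I. (norm (G i x - c i))\<^sup>2) + 4 * Lmax * (\<Sum>i\<in>I. bregman (f i) (G i) x y)"
proof -
  have "(norm (G i y - c i))\<^sup>2 \<le> 2 * (norm (G i x - c i))\<^sup>2 + 4 * Lmax * bregman (f i) (G i) x y"
    if "i \<in> I" for i
  proof -
    have "4 * L i * bregman (f i) (G i) x y \<le> 4 * Lmax * bregman (f i) (G i) x y"
      using assms that bregman_nonneg[of "f i" "G i" x y] by (intro mult_right_mono) auto
    with lipschitz_gradient_shift_le[of "f i" "G i" "L i" y "c i" x] assms that show ?thesis
      by simp
  qed
  then have "(\<Sum>i\<in>I. (norm (G i y - c i))\<^sup>2)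
      \<le> (\<Sum>i\<in>I. 2 * (norm (G i x - c i))\<^sup>2 + 4 * Lmax * bregman (f i) (G i) x y)"
    by (rule sum_mono)
  then show ?thesis
    by (simp add: sum_distrib_left sum.distrib)
qed

lemma convex_on_sum_fun:
  assumes "\<forall>i\<in>I. convex_on S (f i)" "convex S"
  shows "convex_on S (\<lambda>x. \<Sum>i\<in>I. f i x)"
proof (cases "finite I")
  case True
  then show ?thesis
    using assms by (induction I rule: finite_induct) (auto simp: convex_on_const)
qed (use assms in \<open>simp add: convex_on_const\<close>)

lemma has_derivative_scaled_sum_gradient:
  assumes "\<forall>i\<in>I. (f i has_derivative (\<lambda>v. G i x \<bullet> v)) (at x)"
  shows "((\<lambda>x. c * (\<Sum>i\<in>I. f i x)) has_derivative (\<lambda>v. (c *\<^sub>R (\<Sum>i\<in>I. G i x)) \<bullet> v)) (at x)"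
proof -
  have "((\<lambda>x. c * (\<Sum>i\<in>I. f i x)) has_derivative (\<lambda>v. c * (\<Sum>i\<in>I. G i x \<bullet> v))) (at x)"
    using assms by (intro has_derivative_mult_right has_derivative_sum) auto
  then show ?thesis
    by (simp add: inner_sum_left)
qed

lemma bregman_scaled_sum:
  "bregman (\<lambda>x. c * (\<Sum>i\<in>I. f i x)) (\<lambda>x. c *\<^sub>R (\<Sum>i\<in>I. G i x)) x y
    = c * (\<Sum>i\<in>I. bregman (f i) (G i) x y)"
  by (simp add: bregman_def inner_sum_left sum_subtractf sum_distrib_left sum.distrib algebra_simps)

section \<open>Compressed random vectors\<close>

lemma borel_measurable_power2_norm_sum_PiM:
  fixes e :: "'i \<Rightarrow> 'a::euclidean_space"
  assumes "\<And>i. i \<in> I \<Longrightarrow> sets (M i) = sets borel"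
  shows "(\<lambda>m. ennreal ((norm (v + c *\<^sub>R (\<Sum>i\<in>I. m i - e i)))\<^sup>2)) \<in> borel_measurable (PiM I M)"
proof -
  have "(\<lambda>m. m i) \<in> borel_measurable (PiM I M)" if "i \<in> I" for i
    using measurable_component_singleton[OF that, of M] measurable_cong_sets[OF refl assms[OF that]]
    by auto
  then have "(\<lambda>m. \<Sum>i\<in>I. m i - e i) \<in> borel_measurable (PiM I M)"
    by (intro borel_measurable_sum borel_measurable_diff) auto
  then show ?thesis
    by measurable
qed

lemma nn_integral_power2_norm_shift_le:
  fixes M :: "'a::euclidean_space measure"
  assumes "prob_space M" and sets: "sets M = sets borel" and integrable: "integrable M (\<lambda>y. y)"
    and mean: "(\<integral>y. y \<partial>M) = e"
    and variance: "(\<integral>\<^sup>+y. ennreal ((norm (y - e))\<^sup>2) \<partial>M) \<le> ennreal \<sigma>" and "\<sigma> \<ge> 0"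
  shows "(\<integral>\<^sup>+y. ennreal ((norm (v + c *\<^sub>R (y - e)))\<^sup>2) \<partial>M) \<le> ennreal ((norm v)\<^sup>2 + c\<^sup>2 * \<sigma>)"
proof -
  interpret prob_space M
    by fact
  have "(\<lambda>y. (norm (y - e))\<^sup>2) \<in> borel_measurable borel"
    by measurable
  then have "(\<lambda>y. (norm (y - e))\<^sup>2) \<in> borel_measurable M"
    by (simp add: measurable_cong_sets[OF sets refl])
  then have integrable_var: "integrable M (\<lambda>y. (norm (y - e))\<^sup>2)"
    by (rule integrableI_nonneg) (use variance in \<open>auto simp: top_unique intro: le_less_trans\<close>)
  have expand: "(norm (v + c *\<^sub>R (y - e)))\<^sup>2
      = (norm v)\<^sup>2 + 2 * c * (v \<bullet> y - v \<bullet> e) + c\<^sup>2 * (norm (y - e))\<^sup>2" for y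
    by (simp add: power2_norm_add inner_diff_right power_mult_distrib)
  have "ennreal (\<integral>y. (norm (y - e))\<^sup>2 \<partial>M) = (\<integral>\<^sup>+y. ennreal ((norm (y - e))\<^sup>2) \<partial>M)"
    by (rule nn_integral_eq_integral[OF integrable_var, symmetric]) simp
  with variance have "ennreal (\<integral>y. (norm (y - e))\<^sup>2 \<partial>M) \<le> ennreal \<sigma>"
    by (simp only:)
  with \<open>\<sigma> \<ge> 0\<close> have "(\<integral>y. (norm (y - e))\<^sup>2 \<partial>M) \<le> \<sigma>"
    by simp
  then have bound: "(norm v)\<^sup>2 + c\<^sup>2 * (\<integral>y. (norm (y - e))\<^sup>2 \<partial>M) \<le> (norm v)\<^sup>2 + c\<^sup>2 * \<sigma>"
    by (simp add: mult_left_mono)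
  have integrable_expand:
    "integrable M (\<lambda>y. (norm v)\<^sup>2 + 2 * c * (v \<bullet> y - v \<bullet> e) + c\<^sup>2 * (norm (y - e))\<^sup>2)"
    using integrable integrable_var by auto
  have "(\<integral>\<^sup>+y. ennreal ((norm (v + c *\<^sub>R (y - e)))\<^sup>2) \<partial>M)
      = (\<integral>\<^sup>+y. ennreal ((norm v)\<^sup>2 + 2 * c * (v \<bullet> y - v \<bullet> e) + c\<^sup>2 * (norm (y - e))\<^sup>2) \<partial>M)"
    by (simp only: expand)
  also have "\<dots> = ennreal (\<integral>y. (norm v)\<^sup>2 + 2 * c * (v \<bullet> y - v \<bullet> e) + c\<^sup>2 * (norm (y - e))\<^sup>2 \<partial>M)"
    by (rule nn_integral_eq_integral[OF integrable_expand]) (simp add: expand[symmetric])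
  also have "(\<integral>y. (norm v)\<^sup>2 + 2 * c * (v \<bullet> y - v \<bullet> e) + c\<^sup>2 * (norm (y - e))\<^sup>2 \<partial>M)
      = (norm v)\<^sup>2 + c\<^sup>2 * (\<integral>y. (norm (y - e))\<^sup>2 \<partial>M)"
    using integrable integrable_var mean by (simp add: prob_space)
  also have "ennreal \<dots> \<le> ennreal ((norm v)\<^sup>2 + c\<^sup>2 * \<sigma>)"
    using bound by (rule ennreal_leI)
  finally show ?thesis .
qed

lemma nn_integral_PiM_power2_norm_sum_le:
  fixes M :: "'i \<Rightarrow> 'a::euclidean_space measure"
  assumes "finite I" and prob: "\<And>i. prob_space (M i)" and sets: "\<And>i. sets (M i) = sets borel"
    and "\<And>i. i \<in> I \<Longrightarrow> integrable (M i) (\<lambda>y. y)" and "\<And>i. i \<in> I \<Longrightarrow> (\<integral>y. y \<partial>M i) = e i"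
    and "\<And>i. i \<in> I \<Longrightarrow> (\<integral>\<^sup>+y. ennreal ((norm (y - e i))\<^sup>2) \<partial>M i) \<le> ennreal (\<sigma> i)"
    and "\<And>i. i \<in> I \<Longrightarrow> \<sigma> i \<ge> 0"
  shows "(\<integral>\<^sup>+m. ennreal ((norm (v + c *\<^sub>R (\<Sum>i\<in>I. m i - e i)))\<^sup>2) \<partial>PiM I M)
    \<le> ennreal ((norm v)\<^sup>2 + c\<^sup>2 * (\<Sum>i\<in>I. \<sigma> i))"
  using assms(1,4-)
proof (induction I rule: finite_induct)
  case empty
  interpret prob_space "PiM {} M"
    by (rule prob_space_PiM) (rule prob)
  show ?case
    by (simp add: emeasure_space_1)
next
  case (insert j I)
  interpret product_sigma_finite M
    using prob by (simp add: product_sigma_finite_def prob_space_imp_sigma_finite)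
  interpret PI: prob_space "PiM I M"
    by (rule prob_space_PiM) (rule prob)
  define a where "a x = v + c *\<^sub>R (\<Sum>i\<in>I. x i - e i)" for x
  have split: "v + c *\<^sub>R (\<Sum>i\<in>insert j I. (x(j := y)) i - e i) = a x + c *\<^sub>R (y - e j)" for x y
  proof -
    have "(\<Sum>i\<in>I. (x(j := y)) i - e i) = (\<Sum>i\<in>I. x i - e i)"
      using insert.hyps by (intro sum.cong) auto
    with insert.hyps show ?thesis
      by (simp add: a_def scaleR_add_right add_ac)
  qed
  have "(\<integral>\<^sup>+m. ennreal ((norm (v + c *\<^sub>R (\<Sum>i\<in>insert j I. m i - e i)))\<^sup>2) \<partial>PiM (insert j I) M)
      = (\<integral>\<^sup>+x. (\<integral>\<^sup>+y. ennreal ((norm (a x + c *\<^sub>R (y - e j)))\<^sup>2) \<partial>M j) \<partial>PiM I M)"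
    using product_nn_integral_insert[OF insert.hyps borel_measurable_power2_norm_sum_PiM[OF sets]]
    by (simp only: split)
  also have "\<dots> \<le> (\<integral>\<^sup>+x. ennreal ((norm (a x))\<^sup>2) + ennreal (c\<^sup>2 * \<sigma> j) \<partial>PiM I M)"
    using insert.prems prob sets
    by (intro nn_integral_mono) (simp add: nn_integral_power2_norm_shift_le flip: ennreal_plus)
  also have "\<dots> = (\<integral>\<^sup>+x. ennreal ((norm (a x))\<^sup>2) \<partial>PiM I M) + ennreal (c\<^sup>2 * \<sigma> j)"
    using borel_measurable_power2_norm_sum_PiM[OF sets, where v = v and c = c and I = I and e = e]
    by (subst nn_integral_add) (auto simp: a_def PI.emeasure_space_1)
  also have "\<dots> \<le> ennreal ((norm v)\<^sup>2 + c\<^sup>2 * (\<Sum>i\<in>I. \<sigma> i)) + ennreal (c\<^sup>2 * \<sigma> j)"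
    using insert.IH insert.prems by (auto simp: a_def intro: add_right_mono)
  also have "\<dots> = ennreal ((norm v)\<^sup>2 + c\<^sup>2 * (\<Sum>i\<in>insert j I. \<sigma> i))"
    using insert.hyps insert.prems by (simp add: sum_nonneg algebra_simps flip: ennreal_plus)
  finally show ?case .
qed

lemma nn_integral_PiM_unbiased_compressors_le:
  fixes C :: "'i \<Rightarrow> 'a::euclidean_space \<Rightarrow> 'a measure"
  assumes "finite I" and "\<forall>i\<in>I. unbiased_compressor \<omega> (C i)"
  shows "(\<integral>\<^sup>+m. ennreal ((norm (v + c *\<^sub>R (\<Sum>i\<in>I. m i - x i)))\<^sup>2) \<partial>PiM I (\<lambda>i. C i (x i)))
    \<le> ennreal ((norm v)\<^sup>2 + c\<^sup>2 * (\<omega> * (\<Sum>i\<in>I. (norm (x i))\<^sup>2)))"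
proof -
  \<comment> \<open>Padding with Dirac measures outside \<open>I\<close> makes every factor a probability space.\<close>
  define M where "M i = (if i \<in> I then C i (x i) else return borel 0)" for i
  have "PiM I (\<lambda>i. C i (x i)) = PiM I M"
    by (rule PiM_cong) (simp_all add: M_def)
  moreover have "(\<integral>\<^sup>+m. ennreal ((norm (v + c *\<^sub>R (\<Sum>i\<in>I. m i - x i)))\<^sup>2) \<partial>PiM I M)
      \<le> ennreal ((norm v)\<^sup>2 + c\<^sup>2 * (\<Sum>i\<in>I. \<omega> * (norm (x i))\<^sup>2))"
    by (rule nn_integral_PiM_power2_norm_sum_le)
      (use assms in \<open>auto simp: M_def unbiased_compressor_def prob_space_return\<close>)
  ultimately show ?thesis
    by (simp add: sum_distrib_left)
qed

lemma nn_integral_compressed_difference_le: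
  fixes C :: "'i \<Rightarrow> 'a::euclidean_space \<Rightarrow> 'a measure"
  assumes CP: "contractive_compressor \<alpha> CP"
    and "finite I" and C: "\<forall>i\<in>I. unbiased_compressor \<omega> (C i)"
    and "\<And>m. U m - q = v - c *\<^sub>R (\<Sum>i\<in>I. m i - x i)"
  shows "(\<integral>\<^sup>+m. (\<integral>\<^sup>+y. ennreal ((norm ((q + y) - U m))\<^sup>2) \<partial>CP (U m - q)) \<partial>PiM I (\<lambda>i. C i (x i)))
    \<le> ennreal ((1 - \<alpha>) * ((norm v)\<^sup>2 + c\<^sup>2 * (\<omega> * (\<Sum>i\<in>I. (norm (x i))\<^sup>2))))"
proof -
  have difference: "U m - q = v + (- c) *\<^sub>R (\<Sum>i\<in>I. m i - x i)" for m
    using assms by simp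
  have \<alpha>: "0 \<le> 1 - \<alpha>"
    using CP by (simp add: contractive_compressor_def)
  have "(\<integral>\<^sup>+y. ennreal ((norm ((q + y) - U m))\<^sup>2) \<partial>CP (U m - q))
      \<le> ennreal (1 - \<alpha>) * ennreal ((norm (v + (- c) *\<^sub>R (\<Sum>i\<in>I. m i - x i)))\<^sup>2)" for m
  proof -
    have "(q + y) - U m = y - (U m - q)" for y
      by (simp add: algebra_simps)
    then have "(\<integral>\<^sup>+y. ennreal ((norm ((q + y) - U m))\<^sup>2) \<partial>CP (U m - q))
        = (\<integral>\<^sup>+y. ennreal ((norm (y - (U m - q)))\<^sup>2) \<partial>CP (U m - q))"
      by (simp only:)
    also have "\<dots> \<le> ennreal ((1 - \<alpha>) * (norm (U m - q))\<^sup>2)"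
      using CP unfolding contractive_compressor_def by blast
    finally show ?thesis
      using \<alpha> by (simp add: difference ennreal_mult')
  qed
  then have "(\<integral>\<^sup>+m. (\<integral>\<^sup>+y. ennreal ((norm ((q + y) - U m))\<^sup>2) \<partial>CP (U m - q)) \<partial>PiM I (\<lambda>i. C i (x i)))
      \<le> (\<integral>\<^sup>+m. ennreal (1 - \<alpha>) * ennreal ((norm (v + (- c) *\<^sub>R (\<Sum>i\<in>I. m i - x i)))\<^sup>2)
            \<partial>PiM I (\<lambda>i. C i (x i)))"
    by (rule nn_integral_mono)
  also have "\<dots> = ennreal (1 - \<alpha>) * (\<integral>\<^sup>+m. ennreal ((norm (v + (- c) *\<^sub>R (\<Sum>i\<in>I. m i - x i)))\<^sup>2)
            \<partial>PiM I (\<lambda>i. C i (x i)))"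
    by (rule nn_integral_cmult, rule borel_measurable_power2_norm_sum_PiM)
      (use C in \<open>simp add: unbiased_compressor_def\<close>)
  also have "\<dots> \<le> ennreal (1 - \<alpha>) * ennreal ((norm v)\<^sup>2 + (- c)\<^sup>2 * (\<omega> * (\<Sum>i\<in>I. (norm (x i))\<^sup>2)))"
    by (intro mult_left_mono nn_integral_PiM_unbiased_compressors_le assms) simp
  finally show ?thesis
    using \<alpha> by (simp add: ennreal_mult')
qed

section \<open>The proximal step\<close>

lemma arg_min_prox_eq:
  fixes g u y :: "'a::real_inner"
  assumes c: "c > 0" and \<mu>: "\<mu> \<ge> 0"
  shows "(ARG_MIN (\<lambda>x. g \<bullet> x + c * (norm (x - u))\<^sup>2 + \<mu> / 2 * (norm (x - y))\<^sup>2) x. True)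
    = (1 / (2 * c + \<mu>)) *\<^sub>R ((2 * c) *\<^sub>R u + \<mu> *\<^sub>R y - g)"
    (is "arg_min ?\<phi> _ = _")
proof -
  define x0 where "x0 = (1 / (2 * c + \<mu>)) *\<^sub>R ((2 * c) *\<^sub>R u + \<mu> *\<^sub>R y - g)"
  have "g + (2 * c) *\<^sub>R (x0 - u) + \<mu> *\<^sub>R (x0 - y)
      = (2 * c + \<mu>) *\<^sub>R x0 - ((2 * c) *\<^sub>R u + \<mu> *\<^sub>R y - g)"
    by (simp add: algebra_simps)
  also have "\<dots> = 0"
    using c \<mu> by (simp add: x0_def)
  finally have stationary: "g + (2 * c) *\<^sub>R (x0 - u) + \<mu> *\<^sub>R (x0 - y) = 0" .
  have expand: "?\<phi> x = ?\<phi> x0 + (c + \<mu> / 2) * (norm (x - x0))\<^sup>2" for x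
  proof -
    have "?\<phi> x - ?\<phi> x0 - (c + \<mu> / 2) * (norm (x - x0))\<^sup>2
        = (g + (2 * c) *\<^sub>R (x0 - u) + \<mu> *\<^sub>R (x0 - y)) \<bullet> (x - x0)"
      by (simp add: power2_norm_eq_inner inner_simps inner_commute algebra_simps)
    with stationary show ?thesis
      by simp
  qed
  have "?\<phi> x0 \<le> ?\<phi> x" for x
    using expand[of x] c \<mu> by (simp add: add_nonneg_nonneg)
  then have "?\<phi> (arg_min ?\<phi> (\<lambda>x. True)) = ?\<phi> x0"
    by (intro arg_min_equality) auto
  then have "(c + \<mu> / 2) * (norm (arg_min ?\<phi> (\<lambda>x. True) - x0))\<^sup>2 = 0"
    using expand[of "arg_min ?\<phi> (\<lambda>x. True)"] by linarith
  with c \<mu> show ?thesis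
    by (simp add: x0_def)
qed

lemma arg_min_prox_diff:
  fixes g k u w y :: "'a::real_inner"
  assumes "c > 0" and "\<mu> \<ge> 0"
  shows "(ARG_MIN (\<lambda>x. g \<bullet> x + c * (norm (x - u))\<^sup>2 + \<mu> / 2 * (norm (x - y))\<^sup>2) x. True)
      - (ARG_MIN (\<lambda>x. k \<bullet> x + c * (norm (x - w))\<^sup>2 + \<mu> / 2 * (norm (x - y))\<^sup>2) x. True)
    = (2 * c / (2 * c + \<mu>)) *\<^sub>R (u - w) - (1 / (2 * c + \<mu>)) *\<^sub>R (g - k)"
  unfolding arg_min_prox_eq[OF assms] using assms by (simp add: algebra_simps)

lemma theta_bar_pos:
  assumes "Lb > 0" "p > 0" "\<Gamma> > 0" "\<mu> \<ge> 0"
  shows "theta_bar Lb \<mu> p \<Gamma> > 0"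
proof -
  define K where "K = Lb + \<Gamma> * \<mu>"
  define a b c where "a = p * Lb * \<Gamma>" and "b = p * K" and "c = - K"
  have "K > 0"
    using assms by (simp add: K_def add_pos_nonneg)
  then have a: "a > 0" and b: "b > 0" and c: "c < 0"
    using assms by (simp_all add: a_def b_def c_def)
  let ?roots = "{\<theta>. a * \<theta>\<^sup>2 + b * \<theta> + c = 0}"
  have roots: "{\<theta>. p * Lb * \<Gamma> * \<theta>\<^sup>2 + p * (Lb + \<Gamma> * \<mu>) * \<theta> - (Lb + \<Gamma> * \<mu>) = 0} = ?roots"
    unfolding a_def b_def c_def K_def by (rule Collect_cong) linarith
  have D: "b\<^sup>2 < discrim a b c"
    using a c by (simp add: discrim_def mult_pos_neg)
  define r where "r = (- b + sqrt (discrim a b c)) / (2 * a)"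
  have "0 \<le> discrim a b c"
    using D zero_le_power2[of b] by linarith
  then have "r \<in> ?roots"
    using discriminant_iff[of a r b c] a by (auto simp: r_def)
  moreover have "b < sqrt (discrim a b c)"
    using D b real_less_rsqrt by blast
  then have "0 < r"
    using a by (simp add: r_def)
  moreover have "finite ?roots"
    by (rule finite_subset[of _ "{(- b + sqrt (discrim a b c)) / (2 * a),
                                   (- b - sqrt (discrim a b c)) / (2 * a)}"])
      (use discriminant_iff[of a _ b c] a in auto)
  ultimately show ?thesis
    unfolding theta_bar_def roots using Max_ge less_le_trans by blast
qed

lemma step_size_pos:
  assumes "Lb > 0" "0 < p" "p \<le> 1" "\<Gamma> > 0" "\<mu> \<ge> 0" "\<alpha> > 0" "\<tau> > 0" "\<beta> > 0"
    and \<theta>: "\<theta> = min (theta_bar Lb \<mu> p \<Gamma>) (theta_min \<alpha> p \<tau> \<beta>)"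
  shows "p * \<theta> * \<Gamma> / (1 - p * \<theta>) > 0"
proof -
  have "0 < theta_min \<alpha> p \<tau> \<beta>" "theta_min \<alpha> p \<tau> \<beta> \<le> 1 / 4"
    using assms by (simp_all add: theta_min_def)
  then have "0 < \<theta>" "\<theta> \<le> 1 / 4"
    using theta_bar_pos[of Lb p \<Gamma> \<mu>] assms by auto
  moreover have "p * \<theta> \<le> \<theta>"
    using \<open>0 < \<theta>\<close> \<open>0 < p\<close> \<open>p \<le> 1\<close> by (simp add: mult_left_le_one_le)
  ultimately have "p * \<theta> < 1"
    by linarith
  with \<open>0 < \<theta>\<close> \<open>0 < p\<close> \<open>0 < \<Gamma>\<close> show ?thesis
    by simp
qed

lemma prox_difference_second_moment_le:
  fixes n :: nat and f :: "nat \<Rightarrow> 'a::real_inner \<Rightarrow> real" and gf :: "nat \<Rightarrow> 'a \<Rightarrow> 'a"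
  defines "F \<equiv> \<lambda>x. (1 / real n) * (\<Sum>i<n. f i x)"
    and "GF \<equiv> \<lambda>x. (1 / real n) *\<^sub>R (\<Sum>i<n. gf i x)"
  assumes n: "n > 0"
    and cvx: "\<forall>i<n. convex_on UNIV (f i)"
    and grad: "\<forall>i<n. \<forall>x. (f i has_derivative (\<lambda>v. gf i x \<bullet> v)) (at x)"
    and smooth_i: "\<forall>i<n. \<forall>x y. norm (gf i x - gf i y) \<le> Li i * norm (x - y)"
    and Lmax: "\<forall>i<n. Li i \<le> Lmax"
    and smooth: "\<forall>x y. norm (GF x - GF y) \<le> L * norm (x - y)"
    and \<alpha>: "0 < \<alpha>" "\<alpha> \<le> 1" and a: "\<bar>a\<bar> \<le> 1" and \<omega>: "\<omega> \<ge> 0"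
  shows "(1 - \<alpha>) * ((norm (a *\<^sub>R (u - w) - s *\<^sub>R (GF y - k)))\<^sup>2
            + (s / real n)\<^sup>2 * (\<omega> * (\<Sum>i<n. (norm (gf i y - h i))\<^sup>2)))
    \<le> (1 - \<alpha> / 2) * (norm (w - u))\<^sup>2
      + 4 / \<alpha> * s\<^sup>2 * (norm (k - GF z))\<^sup>2
      + 2 * \<omega> / real n * s\<^sup>2 * ((1 / real n) * (\<Sum>i<n. (norm (gf i z - h i))\<^sup>2))
      + s\<^sup>2 * (4 * \<omega> * Lmax / real n + 8 * L / \<alpha>) * bregman F GF z y"
proof -
  have F_convex: "convex_on UNIV F"
    unfolding F_def using cvx n by (intro convex_on_cmul convex_on_sum_fun) auto
  have F_deriv: "\<forall>x. (F has_derivative (\<lambda>v. GF x \<bullet> v)) (at x)"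
    unfolding F_def GF_def using grad by (intro allI has_derivative_scaled_sum_gradient) auto
  define D where "D = bregman F GF z y"
  define E where "E = (\<Sum>i<n. (norm (gf i y - h i))\<^sup>2)"
  define G where "G = (\<Sum>i<n. (norm (gf i z - h i))\<^sup>2)"
  have "(1 - \<alpha>) * (norm (a *\<^sub>R (u - w) - s *\<^sub>R (GF y - k)))\<^sup>2
      \<le> (1 - \<alpha> / 2) * (norm (w - u))\<^sup>2 + 2 / \<alpha> * s\<^sup>2 * (norm (GF y - k))\<^sup>2"
    using contraction_power2_norm_le[OF \<alpha> a, of "u - w" "s *\<^sub>R (GF y - k)"]
    by (simp add: norm_minus_commute power_mult_distrib)
  moreover have "(norm (GF y - k))\<^sup>2 \<le> 2 * (norm (k - GF z))\<^sup>2 + 4 * L * D"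
    using lipschitz_gradient_shift_le[OF F_convex F_deriv smooth, of y k z]
    by (simp add: D_def norm_minus_commute)
  then have "2 / \<alpha> * s\<^sup>2 * (norm (GF y - k))\<^sup>2
      \<le> 2 / \<alpha> * s\<^sup>2 * (2 * (norm (k - GF z))\<^sup>2 + 4 * L * D)"
    using \<alpha> by (intro mult_left_mono) auto
  moreover have "E \<le> 2 * G + 4 * Lmax * (\<Sum>i<n. bregman (f i) (gf i) z y)"
    unfolding E_def G_def using cvx grad smooth_i Lmax
    by (intro sum_power2_norm_gradient_shift_le[where L = Li]) simp_all
  moreover have "(\<Sum>i<n. bregman (f i) (gf i) z y) = real n * D"
    unfolding D_def F_def GF_def bregman_scaled_sum using n by simp
  ultimately have "(1 - \<alpha>) * (norm (a *\<^sub>R (u - w) - s *\<^sub>R (GF y - k)))\<^sup>2 + (s / real n)\<^sup>2 * (\<omega> * E)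
      \<le> (1 - \<alpha> / 2) * (norm (w - u))\<^sup>2 + 2 / \<alpha> * s\<^sup>2 * (2 * (norm (k - GF z))\<^sup>2 + 4 * L * D)
        + (s / real n)\<^sup>2 * (\<omega> * (2 * G + 4 * Lmax * (real n * D)))"
    using \<omega> by (smt (verit) mult_left_mono zero_le_power2)
  moreover have "(1 - \<alpha>) * ((s / real n)\<^sup>2 * (\<omega> * E)) \<le> (s / real n)\<^sup>2 * (\<omega> * E)"
    using \<alpha> \<omega> by (intro mult_left_le_one_le) (auto simp: E_def sum_nonneg)
  moreover have "(1 - \<alpha> / 2) * (norm (w - u))\<^sup>2 + 2 / \<alpha> * s\<^sup>2 * (2 * (norm (k - GF z))\<^sup>2 + 4 * L * D)
        + (s / real n)\<^sup>2 * (\<omega> * (2 * G + 4 * Lmax * (real n * D)))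
      = (1 - \<alpha> / 2) * (norm (w - u))\<^sup>2 + 4 / \<alpha> * s\<^sup>2 * (norm (k - GF z))\<^sup>2
        + 2 * \<omega> / real n * s\<^sup>2 * ((1 / real n) * G) + s\<^sup>2 * (4 * \<omega> * Lmax / real n + 8 * L / \<alpha>) * D"
    using n \<alpha> by (simp add: field_simps power2_eq_square)
  ultimately show ?thesis
    unfolding D_def E_def G_def by (simp add: distrib_left)
qed

theorem lemma8:
  fixes n :: nat
    and f :: "nat \<Rightarrow> 'a::euclidean_space \<Rightarrow> real"
    and gf :: "nat \<Rightarrow> 'a \<Rightarrow> 'a"
    and Li :: "nat \<Rightarrow> real" and Lhat L \<mu> :: real
    and \<omega> \<alpha> Lb p \<tau> \<Gamma> :: real
    and CDy CDz :: "nat \<Rightarrow> 'a \<Rightarrow> 'a measure" and CP :: "'a \<Rightarrow> 'a measure"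
    and w u z k :: 'a and h :: "nat \<Rightarrow> 'a"
    and F :: "'a \<Rightarrow> real" and GF :: "'a \<Rightarrow> 'a" and Lmax \<theta> \<gamma> \<Gamma>' s :: real
    and y' hbar q' :: 'a and g u' :: "(nat \<Rightarrow> 'a) \<Rightarrow> 'a"
  assumes n_pos: "n \<ge> 1"
    \<comment> \<open>Assumption 1\<close>
    and grad: "\<forall>i<n. \<forall>x. (f i has_derivative (\<lambda>v. gf i x \<bullet> v)) (at x)"
    and smooth_i: "\<forall>i<n. \<forall>x y. norm (gf i x - gf i y) \<le> Li i * norm (x - y)"
    and Lhat_pos: "Lhat > 0"
    and Lhat: "\<forall>x y. (1 / real n) * (\<Sum>i<n. (norm (gf i x - gf i y))\<^sup>2) \<le> Lhat\<^sup>2 * (norm (x - y))\<^sup>2"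
    \<comment> \<open>Assumption 2\<close>
    and smooth: "\<forall>x y. norm ((1 / real n) *\<^sub>R (\<Sum>i<n. gf i x) - (1 / real n) *\<^sub>R (\<Sum>i<n. gf i y))
                        \<le> L * norm (x - y)"
    \<comment> \<open>Assumption 3\<close>
    and cvx: "\<forall>i<n. convex_on UNIV (f i)"
    and mu_nonneg: "\<mu> \<ge> 0"
    and strong: "strongly_convex \<mu> (\<lambda>x. (1 / real n) * (\<Sum>i<n. f i x))"
    and minimizer: "\<exists>xs. \<forall>x. (1 / real n) * (\<Sum>i<n. f i xs) \<le> (1 / real n) * (\<Sum>i<n. f i x)"
    \<comment> \<open>compressors (Assumption 4 is built into the product/kernel structure below)\<close>
    and CDy: "\<forall>i<n. unbiased_compressor \<omega> (CDy i)"
    and CDz: "\<forall>i<n. unbiased_compressor \<omega> (CDz i)"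
    and CP: "contractive_compressor \<alpha> CP"
    \<comment> \<open>parameters and current state\<close>
    and Lb_pos: "Lb > 0"
    and p: "0 < p" "p \<le> 1"
    and tau: "0 < \<tau>" "\<tau> \<le> 1"
    and Gamma: "\<Gamma> \<ge> 1"
    \<comment> \<open>quantities computed by Algorithm 2Direction at step t\<close>
    and F_def: "F = (\<lambda>x. (1 / real n) * (\<Sum>i<n. f i x))"
    and GF_def: "GF = (\<lambda>x. (1 / real n) *\<^sub>R (\<Sum>i<n. gf i x))"
    and Lmax_def: "Lmax = Max (Li ` {..<n})"
    and theta_def: "\<theta> = min (theta_bar Lb \<mu> p \<Gamma>) (theta_min \<alpha> p \<tau> (1 / (\<omega> + 1)))"
    and gamma_def: "\<gamma> = p * \<theta> * \<Gamma> / (1 - p * \<theta>)"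
    and Gamma'_def: "\<Gamma>' = \<Gamma> + \<gamma>"
    and s_def: "s = \<gamma> / (Lb + \<Gamma>' * \<mu>)"
    and y'_def: "y' = \<theta> *\<^sub>R w + (1 - \<theta>) *\<^sub>R z"
    and hbar_def: "hbar = (1 / real n) *\<^sub>R (\<Sum>i<n. h i)"
    and g_def: "g = (\<lambda>m. hbar + (1 / real n) *\<^sub>R (\<Sum>i<n. m i))"
    and u'_def: "u' = (\<lambda>m. ARG_MIN (\<lambda>x. g m \<bullet> x + (Lb + \<Gamma> * \<mu>) / (2 * \<gamma>) * (norm (x - u))\<^sup>2
                               + \<mu> / 2 * (norm (x - y'))\<^sup>2) x. True)"
    and q'_def: "q' = (ARG_MIN (\<lambda>x. k \<bullet> x + (Lb + \<Gamma> * \<mu>) / (2 * \<gamma>) * (norm (x - w))\<^sup>2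
                               + \<mu> / 2 * (norm (x - y'))\<^sup>2) x. True)"
  shows "(\<integral>\<^sup>+m. (\<integral>\<^sup>+c. ennreal ((norm ((q' + c) - u' m))\<^sup>2) \<partial>CP (u' m - q'))
             \<partial>(PiM {..<n} (\<lambda>i. CDy i (gf i y' - h i))))
         \<le> ennreal ((1 - \<alpha> / 2) * (norm (w - u))\<^sup>2
                    + 4 / \<alpha> * s\<^sup>2 * (norm (k - GF z))\<^sup>2
                    + 2 * \<omega> / real n * s\<^sup>2 * ((1 / real n) * (\<Sum>i<n. (norm (gf i z - h i))\<^sup>2))
                    + s\<^sup>2 * (4 * \<omega> * Lmax / real n + 8 * L / \<alpha>) * bregman F GF z y')"
proof -
  have \<alpha>: "0 < \<alpha>" "\<alpha> \<le> 1"
    using CP by (auto simp: contractive_compressor_def)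
  have \<omega>: "\<omega> \<ge> 0"
    using CDy n_pos by (auto simp: unbiased_compressor_def)
  have \<gamma>: "\<gamma> > 0"
    unfolding gamma_def using Lb_pos p Gamma mu_nonneg \<alpha> tau \<omega>
    by (intro step_size_pos[OF _ _ _ _ _ _ _ _ theta_def]) auto
  define c where "c = (Lb + \<Gamma> * \<mu>) / (2 * \<gamma>)"
  have "Lb + \<Gamma> * \<mu> > 0"
    using Lb_pos Gamma mu_nonneg by (simp add: add_pos_nonneg)
  moreover have "Lb + \<Gamma> * \<mu> + \<gamma> * \<mu> > 0"
    using calculation \<gamma> mu_nonneg by (simp add: add_pos_nonneg)
  ultimately have c: "c > 0" and s: "s = 1 / (2 * c + \<mu>)"
    using \<gamma> mu_nonneg by (simp_all add: c_def s_def Gamma'_def field_simps)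
  define a where "a = 2 * c / (2 * c + \<mu>)"
  have a: "\<bar>a\<bar> \<le> 1"
    using c mu_nonneg by (simp add: a_def)
  define v where "v = a *\<^sub>R (u - w) - s *\<^sub>R (GF y' - k)"
  have prox_diff: "u' m - q' = a *\<^sub>R (u - w) - s *\<^sub>R (g m - k)" for m
    unfolding u'_def q'_def c_def[symmetric] a_def s by (rule arg_min_prox_diff[OF c mu_nonneg])
  have g: "g m - k = (GF y' - k) + (1 / real n) *\<^sub>R (\<Sum>i<n. m i - (gf i y' - h i))" for m
    unfolding g_def hbar_def GF_def
    by (simp add: sum_subtractf scaleR_diff_right algebra_simps sum.distrib scaleR_add_right)
  have regroup: "a *\<^sub>R x - s *\<^sub>R (y + (1 / real n) *\<^sub>R S) = (a *\<^sub>R x - s *\<^sub>R y) - (s / real n) *\<^sub>R S"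
    for x y S :: 'a
    by (simp add: algebra_simps)
  have "u' m - q' = v - (s / real n) *\<^sub>R (\<Sum>i<n. m i - (gf i y' - h i))" for m
    by (simp only: prox_diff g regroup v_def)
  then have "(\<integral>\<^sup>+m. (\<integral>\<^sup>+c. ennreal ((norm ((q' + c) - u' m))\<^sup>2) \<partial>CP (u' m - q'))
             \<partial>(PiM {..<n} (\<lambda>i. CDy i (gf i y' - h i))))
      \<le> ennreal ((1 - \<alpha>) * ((norm v)\<^sup>2 + (s / real n)\<^sup>2 * (\<omega> * (\<Sum>i<n. (norm (gf i y' - h i))\<^sup>2))))"
    using CDy by (intro nn_integral_compressed_difference_le[OF CP]) auto
  moreover have "\<forall>i<n. Li i \<le> Lmax"
    unfolding Lmax_def by (auto intro: Max_ge)
  then have "(1 - \<alpha>) * ((norm v)\<^sup>2 + (s / real n)\<^sup>2 * (\<omega> * (\<Sum>i<n. (norm (gf i y' - h i))\<^sup>2)))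
      \<le> (1 - \<alpha> / 2) * (norm (w - u))\<^sup>2
        + 4 / \<alpha> * s\<^sup>2 * (norm (k - GF z))\<^sup>2
        + 2 * \<omega> / real n * s\<^sup>2 * ((1 / real n) * (\<Sum>i<n. (norm (gf i z - h i))\<^sup>2))
        + s\<^sup>2 * (4 * \<omega> * Lmax / real n + 8 * L / \<alpha>) * bregman F GF z y'"
    unfolding v_def F_def GF_def using n_pos cvx grad smooth_i smooth \<alpha> a \<omega>
    by (intro prox_difference_second_moment_le) auto
  ultimately show ?thesis
    by (meson ennreal_leI order_trans)
qed

end
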